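(* Let $\mathbb{F}$ be an algebraically closed field of characteristic $0$, $D$ a finite-dimensional $\mathbb{F}$-vector space with $\dim D\geq2$, and $\Gamma$ an additive subgroup of $D^{\ast}$ with $\bigcap_{\alpha\in\Gamma}\ker\alpha=\{0\}$. Let $\mu,\eta\in D^{\ast}$ and $\zeta\in\Gamma$. Then: (i) $\mathscr{M}_\mu$ is irreducible if $\mu\notin\Gamma$; if $\mu\in\Gamma$, then $\mathscr{M}_\mu=\big(\bigoplus_{\alpha\in\Gamma\setminus\{-\mu\}}\mathbb{F}v_\alpha\big)\oplus\mathbb{F}v_{-\mu}$ is a direct sum of two irreducible submodules. (ii) If $\eta\neq0$, then $\mathscr{A}_{\zeta,\eta}$ and $\mathscr{B}_{\zeta,\eta}$ are indecomposable but reducible; $\mathscr{A}_{\zeta,\eta}$ has the irreducible submodule $\bigoplus_{\alpha\in\Gamma\setminus\{-\zeta\}}\mathbb{F}v_\alpha$, while $\mathscr{B}_{\zeta,\eta}$ has the one-dimensional trivial submodule $\mathbb{F}v_{-\zeta}$ and the quotient $\mathscr{B}_{\zeta,\eta}/\mathbb{F}v_{-\zeta}$ is irreducible. If $\eta=0$, then $\mathscr{A}_{\zeta,0}\simeq\mathscr{B}_{\zeta,0}\simeq\mathscr{M}_0$.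
   Context: $\mathbb{F}[\Gamma]$ has basis $\{x^\alpha\mid\alpha\in\Gamma\}$ with $x^\alpha x^\beta=x^{\alpha+\beta}$; $\mathcal{W}(\Gamma,D)=\mathbb{F}[\Gamma]\otimes D$ (elements $x^\alpha\partial$) has bracket $[x^\alpha\partial_1,x^\beta\partial_2]=x^{\alpha+\beta}(\beta(\partial_1)\partial_2-\alpha(\partial_2)\partial_1)$. $\mathcal{S}(\Gamma,D)$ is the subalgebra spanned by $x^\alpha\partial$ with $\alpha\in\Gamma\setminus\{0\}$, $\partial\in\ker\alpha$, graded by $\Gamma$. The modules below are $\mathcal{S}(\Gamma,D)$-modules with basis $\{v_\beta\mid\beta\in\Gamma\}$, where $\alpha\in\Gamma\setminus\{0\}$, $\partial\in\ker\alpha$: $\mathscr{M}_\mu$: $x^\alpha\partial.v_\beta=(\beta+\mu)(\partial)v_{\alpha+\beta}$ for all $\beta$. $\mathscr{A}_{\zeta,\eta}$: $x^\alpha\partial.v_\beta=(\beta+\zeta)(\partial)v_{\alpha+\beta}$ for $\beta\neq-\zeta$, and $x^\alpha\partial.v_{-\zeta}=\eta(\partial)v_{\alpha-\zeta}$. $\mathscr{B}_{\zeta,\eta}$: $x^\alpha\partial.v_\beta=(\beta+\zeta)(\partial)v_{\alpha+\beta}$ for $\beta\neq-\alpha-\zeta$, and $x^\alpha\partial.v_{-\alpha-\zeta}=\eta(\partial)v_{-\zeta}$. *)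

theory Defs
  imports "HOL-Computational_Algebra.Polynomial" "HOL-Library.Function_Algebras"
begin

text \<open>Coordinates: D = ('n \<Rightarrow> 'a) with 'n finite (dim D = CARD('n)); D* is identified
with ('n \<Rightarrow> 'a) via the pairing below, alpha(d) = pair alpha d.\<close>

definition alg_closed :: "'a::field itself \<Rightarrow> bool" where
  "alg_closed _ \<longleftrightarrow> (\<forall>p :: 'a poly. 0 < degree p \<longrightarrow> (\<exists>x. poly p x = 0))"

definition pair :: "('n::finite \<Rightarrow> 'a::field) \<Rightarrow> ('n \<Rightarrow> 'a) \<Rightarrow> 'a" where
  "pair \<alpha> d = (\<Sum>i\<in>UNIV. \<alpha> i * d i)"

definition add_subgroup :: "('n \<Rightarrow> 'a::field) set \<Rightarrow> bool" where
  "add_subgroup G \<longleftrightarrow> 0 \<in> G \<and> (\<forall>a\<in>G. \<forall>b\<in>G. a + b \<in> G) \<and> (\<forall>a\<in>G. - a \<in> G)"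

definition nondeg :: "('n::finite \<Rightarrow> 'a::field) set \<Rightarrow> bool" where
  "nondeg G \<longleftrightarrow> (\<forall>d. (\<forall>\<alpha>\<in>G. pair \<alpha> d = 0) \<longrightarrow> d = 0)"

text \<open>Module elements: finitely supported coefficient families (f beta = coefficient of v_beta),
support inside Gamma.\<close>
definition modspace :: "('n \<Rightarrow> 'a::field) set \<Rightarrow> (('n \<Rightarrow> 'a) \<Rightarrow> 'a) set" where
  "modspace G = {f. finite {\<beta>. f \<beta> \<noteq> 0} \<and> {\<beta>. f \<beta> \<noteq> 0} \<subseteq> G}"

text \<open>Generators x^alpha d of S(Gamma,D): alpha in Gamma - {0}, d in ker alpha.\<close>
definition gens :: "('n::finite \<Rightarrow> 'a::field) set \<Rightarrow> (('n \<Rightarrow> 'a) \<times> ('n \<Rightarrow> 'a)) set" where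
  "gens G = {(\<alpha>, d). \<alpha> \<in> G \<and> \<alpha> \<noteq> 0 \<and> pair \<alpha> d = 0}"

text \<open>A coefficient function c: x^alpha d . v_beta = c alpha d beta v_(alpha+beta);
action extended linearly.\<close>
type_synonym ('n, 'a) coef = "('n \<Rightarrow> 'a) \<Rightarrow> ('n \<Rightarrow> 'a) \<Rightarrow> ('n \<Rightarrow> 'a) \<Rightarrow> 'a"

definition act :: "('n, 'a::field) coef \<Rightarrow> ('n \<Rightarrow> 'a) \<Rightarrow> ('n \<Rightarrow> 'a)
    \<Rightarrow> (('n \<Rightarrow> 'a) \<Rightarrow> 'a) \<Rightarrow> (('n \<Rightarrow> 'a) \<Rightarrow> 'a)" where
  "act c \<alpha> d f = (\<lambda>\<gamma>. c \<alpha> d (\<gamma> - \<alpha>) * f (\<gamma> - \<alpha>))"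

definition cM :: "('n::finite \<Rightarrow> 'a::field) \<Rightarrow> ('n, 'a) coef" where
  "cM \<mu> \<alpha> d \<beta> = pair (\<beta> + \<mu>) d"

definition cA :: "('n::finite \<Rightarrow> 'a::field) \<Rightarrow> ('n \<Rightarrow> 'a) \<Rightarrow> ('n, 'a) coef" where
  "cA \<zeta> \<eta> \<alpha> d \<beta> = (if \<beta> = - \<zeta> then pair \<eta> d else pair (\<beta> + \<zeta>) d)"

definition cB :: "('n::finite \<Rightarrow> 'a::field) \<Rightarrow> ('n \<Rightarrow> 'a) \<Rightarrow> ('n, 'a) coef" where
  "cB \<zeta> \<eta> \<alpha> d \<beta> = (if \<beta> = - \<alpha> - \<zeta> then pair \<eta> d else pair (\<beta> + \<zeta>) d)"

definition submodule :: "('n::finite \<Rightarrow> 'a::field) set \<Rightarrow> ('n, 'a) coef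
    \<Rightarrow> (('n \<Rightarrow> 'a) \<Rightarrow> 'a) set \<Rightarrow> bool" where
  "submodule G c W \<longleftrightarrow> W \<subseteq> modspace G \<and> (\<lambda>_. 0) \<in> W
     \<and> (\<forall>f\<in>W. \<forall>g\<in>W. (\<lambda>b. f b + g b) \<in> W)
     \<and> (\<forall>a f. f \<in> W \<longrightarrow> (\<lambda>b. a * f b) \<in> W)
     \<and> (\<forall>(\<alpha>, d)\<in>gens G. \<forall>f\<in>W. act c \<alpha> d f \<in> W)"

definition irreducible_sub where
  "irreducible_sub G c W \<longleftrightarrow> submodule G c W \<and> W \<noteq> {\<lambda>_. 0}
     \<and> (\<forall>U. submodule G c U \<and> U \<subseteq> W \<longrightarrow> U = {\<lambda>_. 0} \<or> U = W)"

definition irreducible_mod where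
  "irreducible_mod G c \<longleftrightarrow> irreducible_sub G c (modspace G)"

definition reducible_mod where
  "reducible_mod G c \<longleftrightarrow> (\<exists>U. submodule G c U \<and> U \<noteq> {\<lambda>_. 0} \<and> U \<noteq> modspace G)"

definition indecomposable_mod where
  "indecomposable_mod G c \<longleftrightarrow> modspace G \<noteq> {\<lambda>_. 0} \<and>
     \<not> (\<exists>U W. submodule G c U \<and> submodule G c W \<and> U \<noteq> {\<lambda>_. 0} \<and> W \<noteq> {\<lambda>_. 0}
           \<and> U \<inter> W = {\<lambda>_. 0}
           \<and> modspace G = {h. \<exists>f\<in>U. \<exists>g\<in>W. h = (\<lambda>b. f b + g b)})"

text \<open>Irreducibility of the quotient module M/U, expressed via the correspondence
between submodules of M/U and submodules of M containing U.\<close>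
definition irreducible_quot where
  "irreducible_quot G c U \<longleftrightarrow> submodule G c U \<and> U \<noteq> modspace G \<and>
     (\<forall>W. submodule G c W \<and> U \<subseteq> W \<longrightarrow> W = U \<or> W = modspace G)"

definition mod_iso where
  "mod_iso G c1 c2 \<longleftrightarrow> (\<exists>T. bij_betw T (modspace G) (modspace G)
     \<and> (\<forall>f\<in>modspace G. \<forall>g\<in>modspace G. T (\<lambda>b. f b + g b) = (\<lambda>b. T f b + T g b))
     \<and> (\<forall>a. \<forall>f\<in>modspace G. T (\<lambda>b. a * f b) = (\<lambda>b. a * T f b))
     \<and> (\<forall>(\<alpha>, d)\<in>gens G. \<forall>f\<in>modspace G. T (act c1 \<alpha> d f) = act c2 \<alpha> d (T f)))"

definition span_of where
  "span_of G B = {f \<in> modspace G. \<forall>\<beta>. \<beta> \<notin> B \<longrightarrow> f \<beta> = 0}"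

end

theory Submission
  imports Defs
begin

(*
  A generator x^\<alpha> \<partial> acts on M_\<mu> as the shift by \<alpha> scaled by (\<beta> + \<mu>)(\<partial>), a factor which
  the shift does not change since \<alpha>(\<partial>) = 0. Hence x^\<alpha> \<partial> x^(-\<alpha>) \<partial> and
  x^\<alpha> \<partial> x^\<alpha> \<partial> x^(-2\<alpha>) \<partial> are the diagonal operators v_\<beta> \<mapsto> (\<beta> + \<mu>)(\<partial>)^k v_\<beta>, k = 2, 3.
  As \<Gamma> separates the points of D and dim D \<ge> 2, \<alpha> and \<partial> can be chosen so that these
  eigenvalues separate two given weights; so every nonzero submodule avoiding v_(-\<mu>) contains
  some v_\<beta>, and one generator carries v_\<beta> to v_\<gamma> when \<beta> + \<mu> and \<gamma> + \<mu> are independent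
  (two generators otherwise). A_(\<zeta>,\<eta>) agrees with M_\<zeta> on vectors without v_(-\<zeta>)-component,
  and B_(\<zeta>,\<eta>) agrees with M_\<zeta> once that component is discarded; a generator with \<eta>(\<partial>) \<noteq> 0
  links v_(-\<zeta>) with the other basis vectors, which gives indecomposability. For \<eta> = 0 both
  modules are M_\<zeta>, a translate of M_0.
*)

lemma pair_add_left: "pair (a + b) d = pair a d + pair b d"
  unfolding pair_def by (simp add: distrib_right sum.distrib)

lemma pair_minus_left: "pair (- a) d = - pair a d"
  unfolding pair_def by (simp add: sum_negf)

lemma pair_diff_left: "pair (a - b) d = pair a d - pair b d"
  unfolding pair_def by (simp add: left_diff_distrib sum_subtractf)

lemma pair_zero_left [simp]: "pair 0 d = 0"
  unfolding pair_def by simp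

lemma pair_add_right: "pair a (x + y) = pair a x + pair a y"
  unfolding pair_def by (simp add: distrib_left sum.distrib)

lemma pair_scale_left: "pair (\<lambda>i. c * a i) d = c * pair a d"
  unfolding pair_def by (simp add: sum_distrib_left mult.assoc)

lemma pair_delta_right: "pair a (\<lambda>k. if k = j then x else 0) = a j * x"
  unfolding pair_def by (simp add: if_distrib cong: if_cong)

lemma pair_cross_right:
  "pair b ((\<lambda>k. if k = j then a i else 0) + (\<lambda>k. if k = i then - a j else 0)) = b j * a i - b i * a j"
  by (simp add: pair_add_right pair_delta_right)

definition multiples :: "('n \<Rightarrow> 'a::field) \<Rightarrow> ('n \<Rightarrow> 'a) set" where
  "multiples v = range (\<lambda>c. \<lambda>i. c * v i)"

lemma multiplesI: "(\<And>i. x i = c * v i) \<Longrightarrow> x \<in> multiples v"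
  unfolding multiples_def by auto

lemma multiplesE: "x \<in> multiples v \<Longrightarrow> (\<And>c. (\<And>i. x i = c * v i) \<Longrightarrow> P) \<Longrightarrow> P"
  unfolding multiples_def by auto

lemma zero_in_multiples: "0 \<in> multiples v"
  by (rule multiplesI[of _ 0]) simp

lemma self_in_multiples: "v \<in> multiples v"
  by (rule multiplesI[of _ 1]) simp

lemma multiples_swap:
  assumes "u \<noteq> 0" "u \<in> multiples w"
  shows "w \<in> multiples u"
proof -
  obtain c where c: "\<And>i. u i = c * w i" using assms(2) by (metis multiplesE)
  have "c \<noteq> 0" using assms(1) c by (auto simp: fun_eq_iff)
  thus ?thesis using c by (intro multiplesI[of _ "1 / c"]) simp
qed

lemma multiples_diff:
  assumes "x \<in> multiples v" "y \<in> multiples v"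
  shows "x - y \<in> multiples v"
proof -
  obtain a b where "\<And>i. x i = a * v i" "\<And>i. y i = b * v i"
    using assms by (metis multiplesE)
  thus ?thesis by (intro multiplesI[of _ "a - b"]) (simp add: left_diff_distrib)
qed

lemma multiples_trans:
  assumes "u \<in> multiples v" "v \<in> multiples w"
  shows "u \<in> multiples w"
proof -
  obtain a b where "\<And>i. u i = a * v i" "\<And>i. v i = b * w i"
    using assms by (metis multiplesE)
  thus ?thesis by (intro multiplesI[of _ "a * b"]) simp
qed

lemma ker_separates:
  fixes a b :: "'n::finite \<Rightarrow> 'a::field"
  assumes "a \<noteq> 0" and "b \<notin> multiples a"
  shows "\<exists>d. pair a d = 0 \<and> pair b d \<noteq> 0"
proof (rule ccontr)
  assume "\<not> ?thesis"
  hence ker: "\<And>d. pair a d = 0 \<Longrightarrow> pair b d = 0" by blast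
  obtain i where ai: "a i \<noteq> 0" using assms(1) by (auto simp: fun_eq_iff)
  have "b j = b i / a i * a j" for j
  proof -
    have "pair b ((\<lambda>k. if k = j then a i else 0) + (\<lambda>k. if k = i then - a j else 0)) = 0"
      by (rule ker) (simp add: pair_cross_right mult.commute)
    thus ?thesis using ai by (simp add: pair_cross_right field_simps)
  qed
  hence "b \<in> multiples a" by (rule multiplesI)
  with assms(2) show False ..
qed

lemma ker_separates_diff:
  fixes u w :: "'n::finite \<Rightarrow> 'a::field"
  assumes "u \<notin> multiples w" and "w \<noteq> 0"
  shows "\<exists>d. pair (w - u) d = 0 \<and> pair u d \<noteq> 0"
proof (rule ker_separates)
  show "w - u \<noteq> 0"
    using assms(1) self_in_multiples[of w] by (metis eq_iff_diff_eq_0)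
  show "u \<notin> multiples (w - u)"
  proof
    assume "u \<in> multiples (w - u)"
    then obtain c where c: "\<And>i. u i = c * (w i - u i)" by (metis multiplesE minus_apply)
    have lin: "(1 + c) * u i = c * w i" for i using c[of i] by algebra
    show False
    proof (cases "1 + c = 0")
      case True
      hence "c \<noteq> 0" by auto
      hence "w = 0" using lin True by (simp add: fun_eq_iff)
      with assms(2) show False ..
    next
      case False
      hence "u \<in> multiples w"
        using lin by (intro multiplesI[of _ "c / (1 + c)"]) (simp add: field_simps)
      with assms(1) show False ..
    qed
  qed
qed

lemma ker_separates_two:
  fixes a u w :: "'n::finite \<Rightarrow> 'a::field"
  assumes "a \<noteq> 0" "u \<notin> multiples a" "w \<notin> multiples a"
  shows "\<exists>d. pair a d = 0 \<and> pair u d \<noteq> 0 \<and> pair w d \<noteq> 0"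
proof -
  obtain x where x: "pair a x = 0" "pair u x \<noteq> 0" using ker_separates assms(1,2) by blast
  obtain y where y: "pair a y = 0" "pair w y \<noteq> 0" using ker_separates assms(1,3) by blast
  consider (x) "pair w x \<noteq> 0" | (y) "pair u y \<noteq> 0" | (neither) "pair w x = 0" "pair u y = 0"
    by blast
  thus ?thesis
  proof cases
    case x thus ?thesis using \<open>pair a x = 0\<close> \<open>pair u x \<noteq> 0\<close> by (intro exI[of _ x]) simp
  next
    case y thus ?thesis using \<open>pair a y = 0\<close> \<open>pair w y \<noteq> 0\<close> by (intro exI[of _ y]) simp
  next
    case neither
    hence "pair a (x + y) = 0 \<and> pair u (x + y) \<noteq> 0 \<and> pair w (x + y) \<noteq> 0"
      using x y by (simp add: pair_add_right)
    thus ?thesis by (intro exI[of _ "x + y"])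
  qed
qed

lemma ker_nonzero_exists:
  fixes v :: "'n::finite \<Rightarrow> 'a::field"
  assumes "2 \<le> card (UNIV :: 'n set)"
  shows "\<exists>d. d \<noteq> 0 \<and> pair v d = 0"
proof -
  obtain i j :: 'n where ij: "i \<noteq> j"
  proof -
    have "\<not> card (UNIV :: 'n set) \<le> Suc 0" using assms by simp
    thus ?thesis using that card_le_Suc0_iff_eq[OF finite_UNIV] by blast
  qed
  show ?thesis
  proof (cases "v i = 0")
    case True
    have "(\<lambda>k. if k = i then 1 else 0) \<noteq> (0 :: 'n \<Rightarrow> 'a)" by (auto simp: fun_eq_iff)
    thus ?thesis using True by (intro exI[of _ "\<lambda>k. if k = i then 1 else 0"]) (simp add: pair_delta_right)
  next
    case False
    let ?d = "(\<lambda>k. if k = j then v i else 0) + (\<lambda>k. if k = i then - v j else (0::'a))"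
    have "?d j \<noteq> 0" using ij False by simp
    hence "?d \<noteq> 0" by (metis zero_fun_apply)
    moreover have "pair v ?d = 0" by (simp add: pair_cross_right mult.commute)
    ultimately show ?thesis by (intro exI[of _ ?d]) simp
  qed
qed

lemma nondeg_not_subset_multiples:
  fixes \<Gamma> :: "('n::finite \<Rightarrow> 'a::field) set"
  assumes "nondeg \<Gamma>" and "2 \<le> card (UNIV :: 'n set)"
  shows "\<exists>\<alpha>\<in>\<Gamma>. \<alpha> \<notin> multiples v"
proof (rule ccontr)
  assume "\<not> ?thesis"
  hence sub: "\<Gamma> \<subseteq> multiples v" by blast
  obtain d where d: "d \<noteq> 0" "pair v d = 0" using ker_nonzero_exists[OF assms(2)] by metis
  have "pair \<alpha> d = 0" if "\<alpha> \<in> \<Gamma>" for \<alpha>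
  proof -
    have "\<alpha> \<in> multiples v" using sub that by blast
    then obtain c where "\<alpha> = (\<lambda>i. c * v i)" unfolding multiples_def by blast
    thus ?thesis using d(2) by (simp add: pair_scale_left)
  qed
  hence "d = 0" using assms(1) unfolding nondeg_def by blast
  with d(1) show False ..
qed

lemma nondeg_not_subset_two_multiples:
  fixes \<Gamma> :: "('n::finite \<Rightarrow> 'a::field) set"
  assumes "add_subgroup \<Gamma>" "nondeg \<Gamma>" and "2 \<le> card (UNIV :: 'n set)"
  shows "\<exists>\<alpha>\<in>\<Gamma>. \<alpha> \<notin> multiples v \<and> \<alpha> \<notin> multiples w"
proof -
  obtain e where e: "e \<in> \<Gamma>" "e \<notin> multiples v"
    using nondeg_not_subset_multiples assms(2,3) by blast
  obtain e' where e': "e' \<in> \<Gamma>" "e' \<notin> multiples w"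
    using nondeg_not_subset_multiples assms(2,3) by blast
  show ?thesis
  proof (cases "e \<in> multiples w \<and> e' \<in> multiples v")
    case True
    have "e + e' \<in> \<Gamma>" using e e' assms(1) unfolding add_subgroup_def by blast
    moreover have "e + e' \<notin> multiples v"
      using multiples_diff[of "e + e'" v e'] True e(2) by auto
    moreover have "e + e' \<notin> multiples w"
      using multiples_diff[of "e + e'" w e] True e'(2) by auto
    ultimately show ?thesis by blast
  qed (use e e' in blast)
qed

definition basis_vec :: "('n \<Rightarrow> 'a) \<Rightarrow> (('n \<Rightarrow> 'a) \<Rightarrow> 'a::zero_neq_one)" where
  "basis_vec \<beta> = (\<lambda>\<gamma>. if \<gamma> = \<beta> then 1 else 0)"

lemma basis_vec_nonzero: "basis_vec \<beta> \<noteq> (\<lambda>_. 0)"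
  unfolding basis_vec_def by (auto simp: fun_eq_iff)

lemma act_basis_vec:
  "act c \<alpha> d (basis_vec \<beta>) = (\<lambda>\<gamma>. c \<alpha> d \<beta> * basis_vec (\<alpha> + \<beta>) \<gamma>)"
proof (rule ext)
  fix \<gamma>
  have "\<gamma> - \<alpha> = \<beta> \<longleftrightarrow> \<gamma> = \<alpha> + \<beta>" by (auto simp: algebra_simps)
  thus "act c \<alpha> d (basis_vec \<beta>) \<gamma> = c \<alpha> d \<beta> * basis_vec (\<alpha> + \<beta>) \<gamma>"
    unfolding act_def basis_vec_def by auto
qed

lemma act_fun_upd_zero:
  assumes "c \<alpha> d p = 0"
  shows "act c \<alpha> d (f(p := 0)) = act c \<alpha> d f"
proof (rule ext)
  fix \<gamma>
  show "act c \<alpha> d (f(p := 0)) \<gamma> = act c \<alpha> d f \<gamma>"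
    using assms unfolding act_def by (cases "\<gamma> - \<alpha> = p") auto
qed

lemma modspace_iff:
  "f \<in> modspace G \<longleftrightarrow> finite {\<beta>. f \<beta> \<noteq> 0} \<and> (\<forall>\<beta>. f \<beta> \<noteq> 0 \<longrightarrow> \<beta> \<in> G)"
  unfolding modspace_def by auto

lemma modspace_vanishes_outside: "f \<in> modspace G \<Longrightarrow> \<beta> \<notin> G \<Longrightarrow> f \<beta> = 0"
  unfolding modspace_def by auto

lemma modspace_zero: "(\<lambda>_. 0) \<in> modspace G"
  unfolding modspace_def by simp

lemma modspace_add:
  assumes "f \<in> modspace G" "g \<in> modspace G"
  shows "(\<lambda>\<beta>. f \<beta> + g \<beta>) \<in> modspace G"
proof -
  have "{\<beta>. f \<beta> + g \<beta> \<noteq> 0} \<subseteq> {\<beta>. f \<beta> \<noteq> 0} \<union> {\<beta>. g \<beta> \<noteq> 0}" by auto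
  with assms show ?thesis unfolding modspace_def by (auto intro: finite_subset)
qed

lemma modspace_scale: "f \<in> modspace G \<Longrightarrow> (\<lambda>\<beta>. a * f \<beta>) \<in> modspace G"
  unfolding modspace_def by (auto intro: finite_subset[of _ "{\<beta>. f \<beta> \<noteq> 0}"])

lemma modspace_fun_upd_zero: "f \<in> modspace G \<Longrightarrow> f(p := 0) \<in> modspace G"
  unfolding modspace_def by (auto intro: finite_subset[of _ "{\<beta>. f \<beta> \<noteq> 0}"])

lemma basis_vec_in_modspace: "\<beta> \<in> G \<Longrightarrow> basis_vec \<beta> \<in> modspace G"
  unfolding modspace_def basis_vec_def by auto

lemma add_subgroup_add: "add_subgroup G \<Longrightarrow> a \<in> G \<Longrightarrow> b \<in> G \<Longrightarrow> a + b \<in> G"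
  unfolding add_subgroup_def by blast

lemma add_subgroup_neg: "add_subgroup G \<Longrightarrow> a \<in> G \<Longrightarrow> - a \<in> G"
  unfolding add_subgroup_def by blast

lemma add_subgroup_diff: "add_subgroup G \<Longrightarrow> a \<in> G \<Longrightarrow> b \<in> G \<Longrightarrow> a - b \<in> G"
  by (metis add_subgroup_add add_subgroup_neg diff_conv_add_uminus)

lemma modspace_translate:
  assumes "add_subgroup G" "s \<in> G" "f \<in> modspace G"
  shows "(\<lambda>\<gamma>. f (\<gamma> - s)) \<in> modspace G"
proof -
  have "{\<gamma>. f (\<gamma> - s) \<noteq> 0} = (\<lambda>\<beta>. \<beta> + s) ` {\<beta>. f \<beta> \<noteq> 0}"
    by (auto simp: image_iff) (metis diff_add_cancel)
  thus ?thesis using assms(3) add_subgroup_add[OF assms(1) _ assms(2)] unfolding modspace_def by auto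
qed

lemma modspace_act:
  assumes "add_subgroup G" "\<alpha> \<in> G" "f \<in> modspace G"
  shows "act c \<alpha> d f \<in> modspace G"
proof -
  have "(\<lambda>\<gamma>. f (\<gamma> - \<alpha>)) \<in> modspace G" using modspace_translate assms .
  hence "(\<lambda>\<gamma>. c \<alpha> d (\<gamma> - \<alpha>) * f (\<gamma> - \<alpha>)) \<in> modspace G"
    unfolding modspace_def by (auto intro: finite_subset[of _ "{\<gamma>. f (\<gamma> - \<alpha>) \<noteq> 0}"])
  thus ?thesis unfolding act_def .
qed

lemma span_of_iff: "f \<in> span_of G B \<longleftrightarrow> f \<in> modspace G \<and> (\<forall>\<beta>. \<beta> \<notin> B \<longrightarrow> f \<beta> = 0)"
  unfolding span_of_def by simp

lemma span_of_zero: "(\<lambda>_. 0) \<in> span_of G B"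
  by (simp add: span_of_iff modspace_zero)

lemma span_of_removeI: "f \<in> modspace G \<Longrightarrow> f p = 0 \<Longrightarrow> f \<in> span_of G (G - {p})"
  by (auto simp: span_of_iff modspace_vanishes_outside)

lemma span_of_superset: "G \<subseteq> B \<Longrightarrow> span_of G B = modspace G"
  unfolding span_of_def modspace_def by auto

lemma basis_vec_in_span_of: "\<beta> \<in> G \<Longrightarrow> \<beta> \<in> B \<Longrightarrow> basis_vec \<beta> \<in> span_of G B"
  unfolding span_of_iff using basis_vec_in_modspace by (auto simp: basis_vec_def)

lemma submoduleI:
  assumes "W \<subseteq> modspace G" "(\<lambda>_. 0) \<in> W"
    and "\<And>f g. f \<in> W \<Longrightarrow> g \<in> W \<Longrightarrow> (\<lambda>\<beta>. f \<beta> + g \<beta>) \<in> W"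
    and "\<And>a f. f \<in> W \<Longrightarrow> (\<lambda>\<beta>. a * f \<beta>) \<in> W"
    and "\<And>\<alpha> d f. (\<alpha>, d) \<in> gens G \<Longrightarrow> f \<in> W \<Longrightarrow> act c \<alpha> d f \<in> W"
  shows "submodule G c W"
  using assms unfolding submodule_def by auto

lemma
  assumes "submodule G c W"
  shows submodule_subset: "W \<subseteq> modspace G"
    and submodule_zero: "(\<lambda>_. 0) \<in> W"
    and submodule_add: "\<And>f g. f \<in> W \<Longrightarrow> g \<in> W \<Longrightarrow> (\<lambda>\<beta>. f \<beta> + g \<beta>) \<in> W"
    and submodule_scale: "\<And>a f. f \<in> W \<Longrightarrow> (\<lambda>\<beta>. a * f \<beta>) \<in> W"
    and submodule_act: "\<And>\<alpha> d f. (\<alpha>, d) \<in> gens G \<Longrightarrow> f \<in> W \<Longrightarrow> act c \<alpha> d f \<in> W"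
  using assms unfolding submodule_def by auto

lemma gens_iff: "(\<alpha>, d) \<in> gens G \<longleftrightarrow> \<alpha> \<in> G \<and> \<alpha> \<noteq> 0 \<and> pair \<alpha> d = 0"
  unfolding gens_def by simp

lemma submodule_inter: "submodule G c U \<Longrightarrow> submodule G c W \<Longrightarrow> submodule G c (U \<inter> W)"
  by (rule submoduleI) (auto simp: submodule_def)

lemma submodule_nonzero_elem:
  assumes "submodule G c U" "U \<noteq> {\<lambda>_. 0}"
  obtains f where "f \<in> U" "f \<noteq> (\<lambda>_. 0)"
  using assms submodule_zero by blast

lemma submodule_fun_upd_zero:
  assumes "submodule G c W" "h \<in> W" "basis_vec p \<in> W"
  shows "h(p := 0) \<in> W"
proof -
  have "h(p := 0) = (\<lambda>\<beta>. h \<beta> + (- h p) * basis_vec p \<beta>)"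
    by (rule ext) (simp add: basis_vec_def)
  thus ?thesis using assms submodule_add submodule_scale by metis
qed

lemma submodule_contains_by_support:
  assumes W: "submodule G c W" and "finite S" "{\<beta>. f \<beta> \<noteq> 0} \<subseteq> S"
    and basis: "\<And>\<beta>. f \<beta> \<noteq> 0 \<Longrightarrow> basis_vec \<beta> \<in> W"
  shows "f \<in> W"
  using assms(2-)
proof (induction S arbitrary: f rule: finite_induct)
  case empty
  hence "f = (\<lambda>_. 0)" by auto
  thus ?case using submodule_zero[OF W] by simp
next
  case (insert p S)
  have "f(p := 0) \<in> W"
    by (rule insert.IH) (use insert.prems in \<open>auto split: if_splits\<close>)
  show ?case
  proof (cases "f p = 0")
    case True
    thus ?thesis using \<open>f(p := 0) \<in> W\<close> by (simp add: fun_upd_idem)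
  next
    case False
    have "f = (\<lambda>\<beta>. (f(p := 0)) \<beta> + f p * basis_vec p \<beta>)"
      by (rule ext) (simp add: basis_vec_def)
    thus ?thesis using \<open>f(p := 0) \<in> W\<close> insert.prems(2)[OF False]
        submodule_add[OF W] submodule_scale[OF W] by metis
  qed
qed

lemma span_of_subset_submodule:
  assumes W: "submodule G c W" and basis: "\<And>\<beta>. \<beta> \<in> B \<Longrightarrow> \<beta> \<in> G \<Longrightarrow> basis_vec \<beta> \<in> W"
  shows "span_of G B \<subseteq> W"
proof
  fix f assume "f \<in> span_of G B"
  thus "f \<in> W" using submodule_contains_by_support[OF W, of "{\<beta>. f \<beta> \<noteq> 0}" f] basis
    by (auto simp: span_of_iff modspace_iff)
qed

lemma span_of_singleton_eq: "f \<in> span_of G {p} \<Longrightarrow> f = (\<lambda>\<beta>. f p * basis_vec p \<beta>)"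
  by (rule ext) (auto simp: span_of_iff basis_vec_def)

lemma irreducible_sub_span_of_singleton:
  assumes sub: "submodule G c (span_of G {p})" and "p \<in> G"
  shows "irreducible_sub G c (span_of G {p})"
  unfolding irreducible_sub_def
proof (intro conjI allI impI sub)
  show "span_of G {p} \<noteq> {\<lambda>_. 0}"
    using basis_vec_in_span_of[OF \<open>p \<in> G\<close>] basis_vec_nonzero by blast
next
  fix U assume U: "submodule G c U \<and> U \<subseteq> span_of G {p}"
  show "U = {\<lambda>_. 0} \<or> U = span_of G {p}"
  proof (cases "U = {\<lambda>_. 0}")
    case False
    then obtain f where f: "f \<in> U" "f \<noteq> (\<lambda>_. 0)" using submodule_nonzero_elem U by blast
    have f_eq: "f = (\<lambda>\<beta>. f p * basis_vec p \<beta>)" using span_of_singleton_eq f(1) U by blast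
    hence "f p \<noteq> 0" using f(2) by auto
    hence "basis_vec p = (\<lambda>\<beta>. (1 / f p) * f \<beta>)" by (subst f_eq) (simp add: ext)
    hence "basis_vec p \<in> U" using submodule_scale U f(1) by metis
    hence "span_of G {p} \<subseteq> U" using span_of_subset_submodule U by blast
    thus ?thesis using U by blast
  qed simp
qed

lemma act_span_of_singleton:
  assumes "c \<alpha> d p = 0" "f \<in> span_of G {p}"
  shows "act c \<alpha> d f = (\<lambda>_. 0)"
proof -
  have "act c \<alpha> d f = act c \<alpha> d (\<lambda>\<beta>. f p * basis_vec p \<beta>)"
    using span_of_singleton_eq[OF assms(2)] by simp
  also have "\<dots> = (\<lambda>_. 0)"
    using assms(1) by (intro ext) (auto simp: act_def basis_vec_def)
  finally show ?thesis .
qed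

lemma submodule_span_of_singleton:
  assumes "\<And>\<alpha> d. (\<alpha>, d) \<in> gens G \<Longrightarrow> c \<alpha> d p = 0"
  shows "submodule G c (span_of G {p})"
proof (rule submoduleI)
  show "span_of G {p} \<subseteq> modspace G" by (auto simp: span_of_iff)
  show "(\<lambda>_. 0) \<in> span_of G {p}" by (rule span_of_zero)
  show "act c \<alpha> d f \<in> span_of G {p}" if "(\<alpha>, d) \<in> gens G" "f \<in> span_of G {p}" for \<alpha> d f
    using act_span_of_singleton[of c \<alpha> d p, OF assms[OF that(1)] that(2)]
    by (simp add: span_of_iff modspace_zero)
qed (auto simp: span_of_iff modspace_add modspace_scale)

lemma span_of_direct_sum:
  assumes "p \<in> G"
  shows "span_of G (G - {p}) \<inter> span_of G {p} = {\<lambda>_. 0}"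
    and "modspace G = {h. \<exists>f\<in>span_of G (G - {p}). \<exists>g\<in>span_of G {p}. h = (\<lambda>\<beta>. f \<beta> + g \<beta>)}"
proof -
  show "span_of G (G - {p}) \<inter> span_of G {p} = {\<lambda>_. 0}"
  proof
    show "span_of G (G - {p}) \<inter> span_of G {p} \<subseteq> {\<lambda>_. 0}"
    proof
      fix h assume "h \<in> span_of G (G - {p}) \<inter> span_of G {p}"
      hence "h \<beta> = 0" for \<beta> by (cases "\<beta> = p") (simp_all add: span_of_iff)
      thus "h \<in> {\<lambda>_. 0}" by auto
    qed
    show "{\<lambda>_. 0} \<subseteq> span_of G (G - {p}) \<inter> span_of G {p}" using span_of_zero by blast
  qed
  show "modspace G = {h. \<exists>f\<in>span_of G (G - {p}). \<exists>g\<in>span_of G {p}. h = (\<lambda>\<beta>. f \<beta> + g \<beta>)}"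
  proof (intro equalityI subsetI CollectI)
    fix h assume h: "h \<in> modspace G"
    have "h(p := 0) \<in> span_of G (G - {p})"
      using modspace_fun_upd_zero[OF h, of p] modspace_vanishes_outside[OF h]
      by (simp add: span_of_iff)
    moreover have "(\<lambda>\<beta>. h p * basis_vec p \<beta>) \<in> span_of G {p}"
      using basis_vec_in_modspace[OF assms] by (simp add: span_of_iff modspace_scale basis_vec_def)
    moreover have "h = (\<lambda>\<beta>. (h(p := 0)) \<beta> + h p * basis_vec p \<beta>)"
      by (rule ext) (simp add: basis_vec_def)
    ultimately show "\<exists>f\<in>span_of G (G - {p}). \<exists>g\<in>span_of G {p}. h = (\<lambda>\<beta>. f \<beta> + g \<beta>)"
      by (intro bexI[of _ "h(p := 0)"] bexI[of _ "\<lambda>\<beta>. h p * basis_vec p \<beta>"])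
  next
    fix h assume "h \<in> {h. \<exists>f\<in>span_of G (G - {p}). \<exists>g\<in>span_of G {p}. h = (\<lambda>\<beta>. f \<beta> + g \<beta>)}"
    thus "h \<in> modspace G" by (auto simp: span_of_iff modspace_add)
  qed
qed

lemma indecomposable_modI:
  assumes "f \<in> modspace G" "f \<noteq> (\<lambda>_. 0)"
    and common: "\<And>U. submodule G c U \<Longrightarrow> U \<noteq> {\<lambda>_. 0} \<Longrightarrow> f \<in> U"
  shows "indecomposable_mod G c"
  unfolding indecomposable_mod_def
proof (intro conjI notI)
  show "modspace G = {\<lambda>_. 0} \<Longrightarrow> False" using assms(1,2) by blast
next
  assume "\<exists>U W. submodule G c U \<and> submodule G c W \<and> U \<noteq> {\<lambda>_. 0} \<and> W \<noteq> {\<lambda>_. 0}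
           \<and> U \<inter> W = {\<lambda>_. 0} \<and> modspace G = {h. \<exists>f\<in>U. \<exists>g\<in>W. h = (\<lambda>b. f b + g b)}"
  then obtain U W where "submodule G c U" "submodule G c W" "U \<noteq> {\<lambda>_. 0}" "W \<noteq> {\<lambda>_. 0}"
    "U \<inter> W = {\<lambda>_. 0}" by blast
  thus False using common assms(2) by blast
qed

lemma mod_iso_refl: "mod_iso G c c"
  unfolding mod_iso_def by (intro exI[of _ id]) auto

lemma mod_iso_cong:
  assumes "mod_iso G c1 c2"
    and "\<And>\<alpha> d. (\<alpha>, d) \<in> gens G \<Longrightarrow> c1' \<alpha> d = c1 \<alpha> d"
    and "\<And>\<alpha> d. (\<alpha>, d) \<in> gens G \<Longrightarrow> c2' \<alpha> d = c2 \<alpha> d"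
  shows "mod_iso G c1' c2'"
proof -
  from assms(1) obtain T where T: "bij_betw T (modspace G) (modspace G)"
    "\<forall>f\<in>modspace G. \<forall>g\<in>modspace G. T (\<lambda>b. f b + g b) = (\<lambda>b. T f b + T g b)"
    "\<forall>a. \<forall>f\<in>modspace G. T (\<lambda>b. a * f b) = (\<lambda>b. a * T f b)"
    and intertwines: "\<forall>(\<alpha>, d)\<in>gens G. \<forall>f\<in>modspace G. T (act c1 \<alpha> d f) = act c2 \<alpha> d (T f)"
    unfolding mod_iso_def by (elim exE conjE)
  have "\<forall>(\<alpha>, d)\<in>gens G. \<forall>f\<in>modspace G. T (act c1' \<alpha> d f) = act c2' \<alpha> d (T f)"
  proof (intro ballI, clarify)
    fix \<alpha> d f assume gen: "(\<alpha>, d) \<in> gens G" and "f \<in> modspace G"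
    hence "T (act c1 \<alpha> d f) = act c2 \<alpha> d (T f)" using intertwines by blast
    thus "T (act c1' \<alpha> d f) = act c2' \<alpha> d (T f)"
      using assms(2,3)[OF gen] by (simp add: act_def)
  qed
  with T show ?thesis unfolding mod_iso_def by blast
qed

lemma mod_iso_translate:
  fixes G :: "('n::finite \<Rightarrow> 'a::field) set"
  assumes "add_subgroup G" "\<zeta> \<in> G"
  shows "mod_iso G (cM \<mu>) (cM (\<mu> - \<zeta>))"
  unfolding mod_iso_def
proof (intro exI conjI)
  let ?T = "\<lambda>f \<gamma>. f (\<gamma> - \<zeta>) :: 'a"
  have "(\<lambda>\<gamma>. f (\<gamma> + \<zeta>)) \<in> modspace G" if "f \<in> modspace G" for f
    using modspace_translate[OF assms(1) add_subgroup_neg[OF assms] that] by simp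
  thus "bij_betw ?T (modspace G) (modspace G)"
    by (intro bij_betw_byWitness[where f' = "\<lambda>f \<gamma>. f (\<gamma> + \<zeta>)"])
      (auto simp: modspace_translate assms)
  show "\<forall>(\<alpha>, d)\<in>gens G. \<forall>f\<in>modspace G. ?T (act (cM \<mu>) \<alpha> d f) = act (cM (\<mu> - \<zeta>)) \<alpha> d (?T f)"
  proof (intro ballI, clarify)
    have "\<gamma> - \<alpha> - \<zeta> = \<gamma> - \<zeta> - \<alpha>" "\<gamma> - \<alpha> + (\<mu> - \<zeta>) = \<gamma> - \<zeta> - \<alpha> + \<mu>"
      for \<gamma> \<alpha> :: "'n \<Rightarrow> 'a"
      by (simp_all add: algebra_simps)
    thus "?T (act (cM \<mu>) \<alpha> d f) = act (cM (\<mu> - \<zeta>)) \<alpha> d (?T f)" for \<alpha> d f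
      unfolding act_def cM_def by metis
  qed
qed auto

lemma act_cM_kernel:
  "pair \<alpha> d = 0 \<Longrightarrow> act (cM \<mu>) \<alpha> d f = (\<lambda>\<gamma>. pair (\<gamma> + \<mu>) d * f (\<gamma> - \<alpha>))"
  unfolding act_def cM_def by (simp add: pair_add_left pair_diff_left)

lemma square_or_cube_differ:
  fixes a b :: "'a::field"
  assumes "a \<noteq> 0" "a \<noteq> b"
  obtains k :: nat where "k = 2 \<or> k = 3" "a ^ k \<noteq> b ^ k"
proof (cases "a ^ 2 = b ^ 2")
  case True
  have "a ^ 3 \<noteq> b ^ 3"
  proof
    assume "a ^ 3 = b ^ 3"
    hence "a * a ^ 2 = b * a ^ 2" using True by (simp add: power3_eq_cube power2_eq_square)
    thus False using assms by simp
  qed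
  thus ?thesis using that by blast
qed (use that in blast)

lemma act_cA_eq_act_cM:
  assumes "f (- \<zeta>) = 0"
  shows "act (cA \<zeta> \<eta>) \<alpha> d f = act (cM \<zeta>) \<alpha> d f"
proof (rule ext)
  fix \<gamma>
  show "act (cA \<zeta> \<eta>) \<alpha> d f \<gamma> = act (cM \<zeta>) \<alpha> d f \<gamma>"
    using assms unfolding act_def cA_def cM_def by (cases "\<gamma> - \<alpha> = - \<zeta>") auto
qed

lemma submodule_cA_iff_cM:
  assumes "W \<subseteq> span_of G (G - {- \<zeta>})"
  shows "submodule G (cA \<zeta> \<eta>) W \<longleftrightarrow> submodule G (cM \<zeta>) W"
proof -
  have "act (cA \<zeta> \<eta>) \<alpha> d f = act (cM \<zeta>) \<alpha> d f" if "f \<in> W" for \<alpha> d f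
    using assms that by (intro act_cA_eq_act_cM) (auto simp: span_of_iff)
  thus ?thesis unfolding submodule_def by auto
qed

lemma irreducible_sub_cA_iff_cM:
  "irreducible_sub G (cA \<zeta> \<eta>) (span_of G (G - {- \<zeta>}))
     \<longleftrightarrow> irreducible_sub G (cM \<zeta>) (span_of G (G - {- \<zeta>}))"
  unfolding irreducible_sub_def using submodule_cA_iff_cM
  by (metis (no_types, lifting) order_refl)

lemma cB_at_minus_zeta: "\<alpha> \<noteq> 0 \<Longrightarrow> cB \<zeta> \<eta> \<alpha> d (- \<zeta>) = 0"
  unfolding cB_def by simp

lemma cB_eq_cM:
  assumes "\<alpha> + \<beta> \<noteq> - \<zeta>"
  shows "cB \<zeta> \<eta> \<alpha> d \<beta> = cM \<zeta> \<alpha> d \<beta>"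
proof -
  have "\<beta> \<noteq> - \<alpha> - \<zeta>"
  proof
    assume "\<beta> = - \<alpha> - \<zeta>"
    hence "\<alpha> + \<beta> = - \<zeta>" by simp
    with assms show False ..
  qed
  thus ?thesis unfolding cB_def cM_def by simp
qed

lemma submodule_fun_upd_zero_image:
  assumes W: "submodule G c W"
    and at_p: "\<And>\<alpha> d. (\<alpha>, d) \<in> gens G \<Longrightarrow> c \<alpha> d (- \<mu>) = 0"
    and off_p: "\<And>\<alpha> d \<beta>. (\<alpha>, d) \<in> gens G \<Longrightarrow> \<alpha> + \<beta> \<noteq> - \<mu> \<Longrightarrow> c \<alpha> d \<beta> = cM \<mu> \<alpha> d \<beta>"
  shows "submodule G (cM \<mu>) ((\<lambda>h. h(- \<mu> := 0)) ` W)"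
proof -
  let ?R = "\<lambda>h. h(- \<mu> := 0)"
  have intertwine: "act (cM \<mu>) \<alpha> d (?R h) = ?R (act c \<alpha> d h)" if gen: "(\<alpha>, d) \<in> gens G" for \<alpha> d h
  proof (rule ext)
    fix \<gamma>
    have "pair \<alpha> d = 0" using gen by (simp add: gens_iff)
    show "act (cM \<mu>) \<alpha> d (?R h) \<gamma> = ?R (act c \<alpha> d h) \<gamma>"
    proof (cases "\<gamma> = - \<mu>")
      case True
      hence "\<gamma> - \<alpha> + \<mu> = - \<alpha>" by (simp add: algebra_simps)
      thus ?thesis using True \<open>pair \<alpha> d = 0\<close> by (simp add: act_def cM_def pair_minus_left)
    next
      case False
      hence "c \<alpha> d (\<gamma> - \<alpha>) = cM \<mu> \<alpha> d (\<gamma> - \<alpha>)" using off_p[OF gen] by simp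
      thus ?thesis using False at_p[OF gen] by (cases "\<gamma> - \<alpha> = - \<mu>") (auto simp: act_def)
    qed
  qed
  show ?thesis
  proof (rule submoduleI)
    show "?R ` W \<subseteq> modspace G" using submodule_subset[OF W] modspace_fun_upd_zero by blast
    show "(\<lambda>_. 0) \<in> ?R ` W"
      using submodule_zero[OF W] by (intro image_eqI[of _ _ "\<lambda>_. 0"]) auto
    show "(\<lambda>\<beta>. f \<beta> + g \<beta>) \<in> ?R ` W" if fg: "f \<in> ?R ` W" "g \<in> ?R ` W" for f g
    proof -
      obtain f' g' where "f' \<in> W" "g' \<in> W" "f = ?R f'" "g = ?R g'" using fg by blast
      moreover have "(\<lambda>\<beta>. (?R f') \<beta> + (?R g') \<beta>) = ?R (\<lambda>\<beta>. f' \<beta> + g' \<beta>)" by auto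
      ultimately show ?thesis using submodule_add[OF W] by auto
    qed
    show "(\<lambda>\<beta>. a * f \<beta>) \<in> ?R ` W" if f: "f \<in> ?R ` W" for a f
    proof -
      obtain f' where "f' \<in> W" "f = ?R f'" using f by blast
      moreover have "(\<lambda>\<beta>. a * (?R f') \<beta>) = ?R (\<lambda>\<beta>. a * f' \<beta>)" by auto
      ultimately show ?thesis using submodule_scale[OF W] by auto
    qed
    show "act (cM \<mu>) \<alpha> d f \<in> ?R ` W" if "(\<alpha>, d) \<in> gens G" "f \<in> ?R ` W" for \<alpha> d f
      using that intertwine submodule_act[OF W] by auto
  qed
qed

lemma cA_zero: "cA \<zeta> 0 = cM \<zeta>"
  unfolding cA_def cM_def by (intro ext) simp

lemma cB_zero_on_gens: "(\<alpha>, d) \<in> gens G \<Longrightarrow> cB \<zeta> 0 \<alpha> d = cM \<zeta> \<alpha> d"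
  unfolding cB_def cM_def by (intro ext) (auto simp: gens_iff pair_minus_left)

lemma A_zero_iso_B_zero: "mod_iso G (cA \<zeta> 0) (cB \<zeta> 0)"
  by (rule mod_iso_cong[OF mod_iso_refl[of G "cM \<zeta>"]]) (simp_all add: cA_zero cB_zero_on_gens)

lemma B_zero_iso_M_zero:
  fixes G :: "('n::finite \<Rightarrow> 'a::field) set"
  assumes "add_subgroup G" "\<zeta> \<in> G"
  shows "mod_iso G (cB \<zeta> 0) (cM 0)"
proof (rule mod_iso_cong)
  show "mod_iso G (cM \<zeta>) (cM 0)" using mod_iso_translate[OF assms, of \<zeta>] by simp
qed (simp_all add: cB_zero_on_gens)

locale nondeg_subgroup =
  fixes \<Gamma> :: "('n::finite \<Rightarrow> 'a::field_char_0) set"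
  assumes subgroup: "add_subgroup \<Gamma>"
    and nondeg: "nondeg \<Gamma>"
    and dim: "2 \<le> card (UNIV :: 'n set)"
begin

lemma gens_detect_nonzero:
  assumes "\<eta> \<noteq> 0"
  obtains \<alpha> d where "(\<alpha>, d) \<in> gens \<Gamma>" "pair \<eta> d \<noteq> 0"
proof -
  obtain \<alpha> where \<alpha>: "\<alpha> \<in> \<Gamma>" "\<alpha> \<notin> multiples \<eta>"
    using nondeg_not_subset_multiples[OF nondeg dim] by blast
  have "\<alpha> \<noteq> 0" using \<alpha>(2) zero_in_multiples by metis
  moreover have "\<eta> \<notin> multiples \<alpha>" using \<alpha>(2) multiples_swap assms by blast
  ultimately obtain d where "pair \<alpha> d = 0" "pair \<eta> d \<noteq> 0" using ker_separates by metis
  thus ?thesis using that \<alpha>(1) \<open>\<alpha> \<noteq> 0\<close> by (simp add: gens_iff)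
qed

lemma exists_other_element:
  obtains \<epsilon> where "\<epsilon> \<in> \<Gamma>" "\<epsilon> \<noteq> p"
  using nondeg_not_subset_multiples[OF nondeg dim, of p] self_in_multiples by metis

lemma cM_power_op:
  assumes V: "submodule \<Gamma> (cM \<mu>) V" and gen: "(\<alpha>, d) \<in> gens \<Gamma>" and f: "f \<in> V"
    and k: "k = 2 \<or> k = 3"
  shows "(\<lambda>\<gamma>. pair (\<gamma> + \<mu>) d ^ k * f \<gamma>) \<in> V"
proof -
  have \<alpha>: "\<alpha> \<in> \<Gamma>" "\<alpha> \<noteq> 0" "pair \<alpha> d = 0" using gen by (simp_all add: gens_iff)
  have shift: "pair (\<gamma> - \<alpha> + \<mu>) d = pair (\<gamma> + \<mu>) d" for \<gamma>
    using \<alpha>(3) by (simp add: pair_add_left pair_diff_left)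
  have neg: "(- \<alpha>, d) \<in> gens \<Gamma>"
    using \<alpha> add_subgroup_neg[OF subgroup] by (simp add: gens_iff pair_minus_left)
  obtain i where "\<alpha> i \<noteq> 0" using \<alpha>(2) by (auto simp: fun_eq_iff)
  hence "(\<alpha> + \<alpha>) i \<noteq> 0" by (simp add: mult_2[symmetric])
  hence "- (\<alpha> + \<alpha>) \<noteq> 0" by (metis add.inverse_neutral minus_minus zero_fun_apply)
  moreover have "- (\<alpha> + \<alpha>) \<in> \<Gamma>"
    using \<alpha>(1) add_subgroup_neg[OF subgroup] add_subgroup_add[OF subgroup] by blast
  moreover have "pair (- (\<alpha> + \<alpha>)) d = 0"
    by (simp only: pair_minus_left pair_add_left \<alpha>(3)) simp
  ultimately have neg2: "(- (\<alpha> + \<alpha>), d) \<in> gens \<Gamma>" by (simp add: gens_iff)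
  from k show ?thesis
  proof
    assume "k = 2"
    have "act (cM \<mu>) \<alpha> d (act (cM \<mu>) (- \<alpha>) d f) \<in> V"
      using submodule_act[OF V] gen neg f by blast
    also have "act (cM \<mu>) \<alpha> d (act (cM \<mu>) (- \<alpha>) d f) = (\<lambda>\<gamma>. pair (\<gamma> + \<mu>) d ^ k * f \<gamma>)"
      using \<alpha>(3) neg \<open>k = 2\<close> shift
      by (simp add: act_cM_kernel gens_iff power2_eq_square mult.assoc)
    finally show ?thesis .
  next
    assume "k = 3"
    have "act (cM \<mu>) \<alpha> d (act (cM \<mu>) \<alpha> d (act (cM \<mu>) (- (\<alpha> + \<alpha>)) d f)) \<in> V"
      using submodule_act[OF V] gen neg2 f by blast
    also have "act (cM \<mu>) \<alpha> d (act (cM \<mu>) \<alpha> d (act (cM \<mu>) (- (\<alpha> + \<alpha>)) d f))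
        = (\<lambda>\<gamma>. pair (\<gamma> + \<mu>) d ^ k * f \<gamma>)"
      using \<alpha>(3) neg2 \<open>k = 3\<close> shift
      by (simp add: act_cM_kernel gens_iff power3_eq_cube algebra_simps)
    finally show ?thesis .
  qed
qed

lemma submodule_M_isolates_basis_vec:
  assumes V: "submodule \<Gamma> (cM \<mu>) V"
  shows "f \<in> V \<Longrightarrow> f \<noteq> (\<lambda>_. 0) \<Longrightarrow> f (- \<mu>) = 0 \<Longrightarrow> \<exists>\<beta>\<in>\<Gamma>. \<beta> \<noteq> - \<mu> \<and> basis_vec \<beta> \<in> V"
proof (induction "card {\<beta>. f \<beta> \<noteq> 0}" arbitrary: f rule: less_induct)
  case less
  define S where "S = {\<beta>. f \<beta> \<noteq> 0}"
  have "f \<in> modspace \<Gamma>" using less.prems(1) submodule_subset[OF V] by blast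
  hence S: "finite S" "S \<subseteq> \<Gamma>" unfolding S_def modspace_def by auto
  obtain \<beta>1 where \<beta>1: "f \<beta>1 \<noteq> 0" using less.prems(2) by auto
  have "\<beta>1 \<noteq> - \<mu>" using \<beta>1 less.prems(3) by auto
  show ?case
  proof (cases "S = {\<beta>1}")
    case True
    have "basis_vec \<beta>1 = (\<lambda>\<beta>. (1 / f \<beta>1) * f \<beta>)"
      using True \<beta>1 unfolding S_def basis_vec_def by (auto intro!: ext)
    hence "basis_vec \<beta>1 \<in> V" using submodule_scale[OF V less.prems(1)] by metis
    thus ?thesis using \<open>\<beta>1 \<noteq> - \<mu>\<close> S(2) True by blast
  next
    case False
    then obtain \<beta>2 where \<beta>2: "f \<beta>2 \<noteq> 0" "\<beta>2 \<noteq> \<beta>1" using \<beta>1 unfolding S_def by blast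
    \<comment> \<open>Find \<open>x\<^sup>\<alpha>\<partial>\<close> whose eigenvalues \<open>(\<beta> + \<mu>)(\<partial>)\<close> separate \<open>\<beta>1\<close> from \<open>\<beta>2\<close>.\<close>
    have u: "\<beta>1 + \<mu> \<noteq> 0" and x: "\<beta>1 - \<beta>2 \<noteq> 0"
      using \<open>\<beta>1 \<noteq> - \<mu>\<close> \<beta>2(2) by (auto simp: add_eq_0_iff2)
    obtain \<alpha> where \<alpha>: "\<alpha> \<in> \<Gamma>" "\<alpha> \<notin> multiples (\<beta>1 + \<mu>)" "\<alpha> \<notin> multiples (\<beta>1 - \<beta>2)"
      using nondeg_not_subset_two_multiples[OF subgroup nondeg dim] by blast
    have "\<alpha> \<noteq> 0" using \<alpha>(2) zero_in_multiples by metis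
    moreover have "\<beta>1 + \<mu> \<notin> multiples \<alpha>" "\<beta>1 - \<beta>2 \<notin> multiples \<alpha>"
      using \<alpha>(2,3) u x multiples_swap by blast+
    ultimately obtain d where d: "pair \<alpha> d = 0" "pair (\<beta>1 + \<mu>) d \<noteq> 0" "pair (\<beta>1 - \<beta>2) d \<noteq> 0"
      using ker_separates_two by metis
    have gen: "(\<alpha>, d) \<in> gens \<Gamma>" using \<alpha>(1) \<open>\<alpha> \<noteq> 0\<close> d(1) by (simp add: gens_iff)
    define a where "a = pair (\<beta>1 + \<mu>) d"
    define b where "b = pair (\<beta>2 + \<mu>) d"
    have "a \<noteq> 0" "a \<noteq> b"
      using d(2,3) unfolding a_def b_def by (simp_all add: pair_add_left pair_diff_left)
    then obtain k where k: "k = 2 \<or> k = 3" "a ^ k \<noteq> b ^ k" by (rule square_or_cube_differ)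
    define g where "g = (\<lambda>\<gamma>. pair (\<gamma> + \<mu>) d ^ k * f \<gamma> + (- (a ^ k)) * f \<gamma>)"
    have "{\<beta>. g \<beta> \<noteq> 0} \<subseteq> S - {\<beta>1}"
    proof
      fix \<beta> assume "\<beta> \<in> {\<beta>. g \<beta> \<noteq> 0}"
      hence "g \<beta> \<noteq> 0" by simp
      moreover have "g \<beta>1 = 0" unfolding g_def a_def by simp
      ultimately show "\<beta> \<in> S - {\<beta>1}" unfolding S_def by (auto simp: g_def)
    qed
    hence "card {\<beta>. g \<beta> \<noteq> 0} \<le> card (S - {\<beta>1})" using S(1) by (intro card_mono) auto
    also have "\<dots> < card S" using S(1) \<beta>1 by (intro card_Diff1_less) (auto simp: S_def)
    finally have smaller: "card {\<beta>. g \<beta> \<noteq> 0} < card {\<beta>. f \<beta> \<noteq> 0}" unfolding S_def .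
    have "g \<in> V" unfolding g_def
      using submodule_add[OF V cM_power_op[OF V gen less.prems(1) k(1)]
          submodule_scale[OF V less.prems(1)]] .
    moreover have "g \<beta>2 \<noteq> 0" using \<beta>2(1) k(2) unfolding g_def b_def by simp
    hence "g \<noteq> (\<lambda>_. 0)" by auto
    moreover have "g (- \<mu>) = 0" using less.prems(3) unfolding g_def by simp
    ultimately show ?thesis using less.hyps[OF smaller] by blast
  qed
qed

lemma submodule_M_step:
  assumes V: "submodule \<Gamma> (cM \<mu>) V" and "\<beta> \<in> \<Gamma>" "\<gamma> \<in> \<Gamma>"
    and indep: "\<beta> + \<mu> \<notin> multiples (\<gamma> + \<mu>)" and "\<gamma> + \<mu> \<noteq> 0"
    and "basis_vec \<beta> \<in> V"
  shows "basis_vec \<gamma> \<in> V"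
proof -
  obtain d where d: "pair (\<gamma> + \<mu> - (\<beta> + \<mu>)) d = 0" "pair (\<beta> + \<mu>) d \<noteq> 0"
    using ker_separates_diff[OF indep \<open>\<gamma> + \<mu> \<noteq> 0\<close>] by metis
  have "\<gamma> - \<beta> \<noteq> 0" using indep self_in_multiples[of "\<gamma> + \<mu>"] by auto
  hence gen: "(\<gamma> - \<beta>, d) \<in> gens \<Gamma>"
    using d(1) add_subgroup_diff[OF subgroup \<open>\<gamma> \<in> \<Gamma>\<close> \<open>\<beta> \<in> \<Gamma>\<close>] by (simp add: gens_iff)
  have "act (cM \<mu>) (\<gamma> - \<beta>) d (basis_vec \<beta>) = (\<lambda>x. pair (\<beta> + \<mu>) d * basis_vec \<gamma> x)"
    by (simp add: act_basis_vec cM_def)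
  hence "(\<lambda>x. pair (\<beta> + \<mu>) d * basis_vec \<gamma> x) \<in> V"
    using submodule_act[OF V gen \<open>basis_vec \<beta> \<in> V\<close>] by simp
  from submodule_scale[OF V this, of "1 / pair (\<beta> + \<mu>) d"] show ?thesis
    using d(2) by simp
qed

lemma submodule_M_spreads_basis_vec:
  assumes V: "submodule \<Gamma> (cM \<mu>) V" and \<beta>: "\<beta> \<in> \<Gamma>" "\<beta> \<noteq> - \<mu>" and \<gamma>: "\<gamma> \<in> \<Gamma>" "\<gamma> \<noteq> - \<mu>"
    and "basis_vec \<beta> \<in> V"
  shows "basis_vec \<gamma> \<in> V"
proof -
  have u: "\<beta> + \<mu> \<noteq> 0" and w: "\<gamma> + \<mu> \<noteq> 0" using \<beta>(2) \<gamma>(2) by (auto simp: add_eq_0_iff2)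
  show ?thesis
  proof (cases "\<beta> + \<mu> \<in> multiples (\<gamma> + \<mu>)")
    case False
    thus ?thesis using submodule_M_step[OF V \<beta>(1) \<gamma>(1) _ w] \<open>basis_vec \<beta> \<in> V\<close> by blast
  next
    case True
    \<comment> \<open>\<open>\<beta> + \<mu>\<close> and \<open>\<gamma> + \<mu>\<close> are proportional: pass through \<open>\<delta> = \<beta> + e\<close> off their common line.\<close>
    obtain e where e: "e \<in> \<Gamma>" "e \<notin> multiples (\<beta> + \<mu>)"
      using nondeg_not_subset_multiples[OF nondeg dim] by blast
    define \<delta> where "\<delta> = \<beta> + e"
    have \<delta>: "\<delta> \<in> \<Gamma>" using add_subgroup_add[OF subgroup \<beta>(1) e(1)] by (simp add: \<delta>_def)
    have off_line: "\<delta> + \<mu> \<notin> multiples (\<beta> + \<mu>)"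
    proof
      assume "\<delta> + \<mu> \<in> multiples (\<beta> + \<mu>)"
      hence "(\<delta> + \<mu>) - (\<beta> + \<mu>) \<in> multiples (\<beta> + \<mu>)"
        using multiples_diff self_in_multiples by blast
      thus False using e(2) by (simp add: \<delta>_def)
    qed
    hence "\<delta> + \<mu> \<noteq> 0" using zero_in_multiples by metis
    moreover have "\<beta> + \<mu> \<notin> multiples (\<delta> + \<mu>)" using off_line multiples_swap u by blast
    ultimately have "basis_vec \<delta> \<in> V"
      using submodule_M_step[OF V \<beta>(1) \<delta>] \<open>basis_vec \<beta> \<in> V\<close> by blast
    moreover have "\<delta> + \<mu> \<notin> multiples (\<gamma> + \<mu>)"
      using off_line multiples_trans multiples_swap[OF u True] by blast
    ultimately show ?thesis using submodule_M_step[OF V \<delta> \<gamma>(1) _ w] by blast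
  qed
qed

lemma submodule_M_contains_basis_vec:
  assumes V: "submodule \<Gamma> (cM \<mu>) V" and f: "f \<in> V" "f \<noteq> (\<lambda>_. 0)" "f (- \<mu>) = 0"
    and \<gamma>: "\<gamma> \<in> \<Gamma>" "\<gamma> \<noteq> - \<mu>"
  shows "basis_vec \<gamma> \<in> V"
proof -
  obtain \<beta> where "\<beta> \<in> \<Gamma>" "\<beta> \<noteq> - \<mu>" "basis_vec \<beta> \<in> V"
    using submodule_M_isolates_basis_vec[OF V f] by blast
  thus ?thesis using submodule_M_spreads_basis_vec[OF V _ _ \<gamma>] by blast
qed

lemma submodule_M_avoiding:
  "submodule \<Gamma> (cM \<mu>) (span_of \<Gamma> (\<Gamma> - {- \<mu>}))"
proof (rule submoduleI)
  fix \<alpha> d f assume gen: "(\<alpha>, d) \<in> gens \<Gamma>" and f: "f \<in> span_of \<Gamma> (\<Gamma> - {- \<mu>})"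
  have "act (cM \<mu>) \<alpha> d f \<in> modspace \<Gamma>"
    using modspace_act[OF subgroup] gen f by (simp add: gens_iff span_of_iff)
  moreover have "act (cM \<mu>) \<alpha> d f (- \<mu>) = 0"
    using gen by (simp add: gens_iff act_cM_kernel)
  ultimately show "act (cM \<mu>) \<alpha> d f \<in> span_of \<Gamma> (\<Gamma> - {- \<mu>})"
    using modspace_vanishes_outside by (auto simp: span_of_iff)
qed (auto simp: span_of_iff modspace_zero modspace_add modspace_scale)

lemma irreducible_sub_M_avoiding:
  "irreducible_sub \<Gamma> (cM \<mu>) (span_of \<Gamma> (\<Gamma> - {- \<mu>}))"
  unfolding irreducible_sub_def
proof (intro conjI allI impI submodule_M_avoiding)
  obtain \<epsilon> where "\<epsilon> \<in> \<Gamma>" "\<epsilon> \<noteq> - \<mu>" by (rule exists_other_element)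
  hence "basis_vec \<epsilon> \<in> span_of \<Gamma> (\<Gamma> - {- \<mu>})" by (intro basis_vec_in_span_of) auto
  thus "span_of \<Gamma> (\<Gamma> - {- \<mu>}) \<noteq> {\<lambda>_. 0}" using basis_vec_nonzero by force
next
  fix U assume U: "submodule \<Gamma> (cM \<mu>) U \<and> U \<subseteq> span_of \<Gamma> (\<Gamma> - {- \<mu>})"
  show "U = {\<lambda>_. 0} \<or> U = span_of \<Gamma> (\<Gamma> - {- \<mu>})"
  proof (cases "U = {\<lambda>_. 0}")
    case False
    then obtain f where f: "f \<in> U" "f \<noteq> (\<lambda>_. 0)" using submodule_nonzero_elem U by blast
    have "f \<in> span_of \<Gamma> (\<Gamma> - {- \<mu>})" using f(1) U by blast
    hence "f (- \<mu>) = 0" by (simp add: span_of_iff)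
    have "span_of \<Gamma> (\<Gamma> - {- \<mu>}) \<subseteq> U"
    proof (rule span_of_subset_submodule)
      show "submodule \<Gamma> (cM \<mu>) U" using U ..
      show "basis_vec \<beta> \<in> U" if "\<beta> \<in> \<Gamma> - {- \<mu>}" for \<beta>
        using submodule_M_contains_basis_vec[OF _ f \<open>f (- \<mu>) = 0\<close>] U that by blast
    qed
    thus ?thesis using U by blast
  qed simp
qed

lemma M_irreducible:
  assumes "\<mu> \<notin> \<Gamma>"
  shows "irreducible_mod \<Gamma> (cM \<mu>)"
proof -
  have "- \<mu> \<notin> \<Gamma>" using assms add_subgroup_neg[OF subgroup, of "- \<mu>"] by auto
  hence "span_of \<Gamma> (\<Gamma> - {- \<mu>}) = modspace \<Gamma>" by (intro span_of_superset) blast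
  thus ?thesis using irreducible_sub_M_avoiding[of \<mu>] unfolding irreducible_mod_def by simp
qed

lemma M_decomposes:
  assumes "\<mu> \<in> \<Gamma>"
  shows "irreducible_sub \<Gamma> (cM \<mu>) (span_of \<Gamma> (\<Gamma> - {- \<mu>}))"
    and "irreducible_sub \<Gamma> (cM \<mu>) (span_of \<Gamma> {- \<mu>})"
    and "span_of \<Gamma> (\<Gamma> - {- \<mu>}) \<inter> span_of \<Gamma> {- \<mu>} = {\<lambda>_. 0}"
    and "modspace \<Gamma> = {h. \<exists>f\<in>span_of \<Gamma> (\<Gamma> - {- \<mu>}). \<exists>g\<in>span_of \<Gamma> {- \<mu>}. h = (\<lambda>b. f b + g b)}"
proof -
  have "- \<mu> \<in> \<Gamma>" using add_subgroup_neg[OF subgroup assms] .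
  show "irreducible_sub \<Gamma> (cM \<mu>) (span_of \<Gamma> (\<Gamma> - {- \<mu>}))" by (rule irreducible_sub_M_avoiding)
  show "irreducible_sub \<Gamma> (cM \<mu>) (span_of \<Gamma> {- \<mu>})"
    by (intro irreducible_sub_span_of_singleton submodule_span_of_singleton \<open>- \<mu> \<in> \<Gamma>\<close>)
      (simp add: cM_def)
  show "span_of \<Gamma> (\<Gamma> - {- \<mu>}) \<inter> span_of \<Gamma> {- \<mu>} = {\<lambda>_. 0}"
    and "modspace \<Gamma> = {h. \<exists>f\<in>span_of \<Gamma> (\<Gamma> - {- \<mu>}). \<exists>g\<in>span_of \<Gamma> {- \<mu>}. h = (\<lambda>b. f b + g b)}"
    using span_of_direct_sum[OF \<open>- \<mu> \<in> \<Gamma>\<close>] by simp_all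
qed

lemma A_submodule_contains_avoiding:
  assumes "\<eta> \<noteq> 0" and U: "submodule \<Gamma> (cA \<zeta> \<eta>) U" "U \<noteq> {\<lambda>_. 0}"
  shows "span_of \<Gamma> (\<Gamma> - {- \<zeta>}) \<subseteq> U"
proof -
  let ?N = "span_of \<Gamma> (\<Gamma> - {- \<zeta>})"
  have irr: "irreducible_sub \<Gamma> (cA \<zeta> \<eta>) ?N"
    using irreducible_sub_M_avoiding irreducible_sub_cA_iff_cM by blast
  hence "submodule \<Gamma> (cA \<zeta> \<eta>) (U \<inter> ?N)"
    using submodule_inter[OF U(1)] unfolding irreducible_sub_def by blast
  moreover have "\<exists>w\<in>U \<inter> ?N. w \<noteq> (\<lambda>_. 0)"
  proof -
    obtain u where u: "u \<in> U" "u \<noteq> (\<lambda>_. 0)" using submodule_nonzero_elem U by blast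
    have u_mod: "u \<in> modspace \<Gamma>" using u(1) submodule_subset[OF U(1)] by blast
    show ?thesis
    proof (cases "u (- \<zeta>) = 0")
      case True
      thus ?thesis using u span_of_removeI[OF u_mod] by blast
    next
      case False
      \<comment> \<open>No basis vector is moved onto \<open>v\<^bsub>-\<zeta>\<^esub>\<close>, while \<open>v\<^bsub>-\<zeta>\<^esub>\<close> goes to \<open>\<eta>(\<partial>) v\<^bsub>\<alpha>-\<zeta>\<^esub>\<close>.\<close>
      obtain \<alpha> d where gen: "(\<alpha>, d) \<in> gens \<Gamma>" and "pair \<eta> d \<noteq> 0"
        using gens_detect_nonzero[OF \<open>\<eta> \<noteq> 0\<close>] by blast
      define w where "w = act (cA \<zeta> \<eta>) \<alpha> d u"
      have "w \<in> U" unfolding w_def using submodule_act[OF U(1) gen u(1)] .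
      have "w \<in> modspace \<Gamma>" using \<open>w \<in> U\<close> submodule_subset[OF U(1)] by blast
      moreover have "w (- \<zeta>) = 0"
      proof -
        have "- \<zeta> - \<alpha> \<noteq> - \<zeta>" "- \<zeta> - \<alpha> + \<zeta> = - \<alpha>" using gen by (auto simp: gens_iff)
        thus ?thesis using gen by (simp add: w_def act_def cA_def gens_iff pair_minus_left)
      qed
      ultimately have "w \<in> U \<inter> ?N" using \<open>w \<in> U\<close> span_of_removeI by blast
      moreover have "w (\<alpha> - \<zeta>) = pair \<eta> d * u (- \<zeta>)" by (simp add: w_def act_def cA_def)
      hence "w \<noteq> (\<lambda>_. 0)" using \<open>pair \<eta> d \<noteq> 0\<close> False by auto
      ultimately show ?thesis by blast
    qed
  qed
  hence "U \<inter> ?N \<noteq> {\<lambda>_. 0}" by blast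
  ultimately have "U \<inter> ?N = ?N" using irr unfolding irreducible_sub_def by blast
  thus ?thesis by blast
qed

lemma A_structure:
  assumes "\<zeta> \<in> \<Gamma>" "\<eta> \<noteq> 0"
  shows "indecomposable_mod \<Gamma> (cA \<zeta> \<eta>)" "reducible_mod \<Gamma> (cA \<zeta> \<eta>)"
    and "irreducible_sub \<Gamma> (cA \<zeta> \<eta>) (span_of \<Gamma> (\<Gamma> - {- \<zeta>}))"
proof -
  let ?N = "span_of \<Gamma> (\<Gamma> - {- \<zeta>})"
  show irr: "irreducible_sub \<Gamma> (cA \<zeta> \<eta>) ?N"
    using irreducible_sub_M_avoiding irreducible_sub_cA_iff_cM by blast
  obtain \<epsilon> where "\<epsilon> \<in> \<Gamma>" "\<epsilon> \<noteq> - \<zeta>" by (rule exists_other_element)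
  hence "basis_vec \<epsilon> \<in> ?N" by (intro basis_vec_in_span_of) auto
  show "indecomposable_mod \<Gamma> (cA \<zeta> \<eta>)"
  proof (rule indecomposable_modI)
    show "basis_vec \<epsilon> \<in> modspace \<Gamma>" using \<open>basis_vec \<epsilon> \<in> ?N\<close> by (simp add: span_of_iff)
    show "basis_vec \<epsilon> \<in> U" if "submodule \<Gamma> (cA \<zeta> \<eta>) U" "U \<noteq> {\<lambda>_. 0}" for U
      using A_submodule_contains_avoiding[OF assms(2) that] \<open>basis_vec \<epsilon> \<in> ?N\<close> by blast
  qed (rule basis_vec_nonzero)
  have "- \<zeta> \<in> \<Gamma>" using add_subgroup_neg[OF subgroup assms(1)] .
  hence "basis_vec (- \<zeta>) \<in> modspace \<Gamma> - ?N"
    using basis_vec_in_modspace by (auto simp: span_of_iff basis_vec_def)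
  thus "reducible_mod \<Gamma> (cA \<zeta> \<eta>)"
    using irr unfolding reducible_mod_def irreducible_sub_def by blast
qed

lemma B_submodule_reaches_basis_vec:
  assumes U: "submodule \<Gamma> (cB \<zeta> \<eta>) U" and f: "f \<in> U" "f \<beta> \<noteq> 0" "\<beta> \<noteq> - \<zeta>"
    and \<gamma>: "\<gamma> \<in> \<Gamma>" "\<gamma> \<noteq> - \<zeta>"
  obtains h where "h \<in> U" "h(- \<zeta> := 0) = basis_vec \<gamma>"
proof -
  let ?V = "(\<lambda>h. h(- \<zeta> := 0)) ` U"
  have V: "submodule \<Gamma> (cM \<zeta>) ?V"
    by (rule submodule_fun_upd_zero_image[OF U]) (simp_all add: gens_iff cB_eq_cM cM_def)
  have nonzero: "f(- \<zeta> := 0) \<noteq> (\<lambda>_. 0)" using f(2,3) by (metis fun_upd_other)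
  have "f(- \<zeta> := 0) \<in> ?V" using f(1) by (rule imageI)
  moreover have "(f(- \<zeta> := 0)) (- \<zeta>) = 0" by simp
  ultimately have "basis_vec \<gamma> \<in> ?V" by (rule submodule_M_contains_basis_vec[OF V _ nonzero _ \<gamma>])
  then obtain h where "h \<in> U" "basis_vec \<gamma> = h(- \<zeta> := 0)" by (rule imageE)
  thus ?thesis using that by simp
qed

lemma B_submodule_contains_trivial:
  assumes "\<zeta> \<in> \<Gamma>" "\<eta> \<noteq> 0" and U: "submodule \<Gamma> (cB \<zeta> \<eta>) U" "U \<noteq> {\<lambda>_. 0}"
  shows "basis_vec (- \<zeta>) \<in> U"
proof -
  obtain u where u: "u \<in> U" "u \<noteq> (\<lambda>_. 0)" using submodule_nonzero_elem U by blast
  show ?thesis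
  proof (cases "\<exists>\<beta>. \<beta> \<noteq> - \<zeta> \<and> u \<beta> \<noteq> 0")
    case True
    then obtain \<beta> where \<beta>: "\<beta> \<noteq> - \<zeta>" "u \<beta> \<noteq> 0" by blast
    \<comment> \<open>\<open>x\<^sup>\<alpha>\<partial>\<close> sends \<open>v\<^bsub>-\<alpha>-\<zeta>\<^esub>\<close> to \<open>\<eta>(\<partial>) v\<^bsub>-\<zeta>\<^esub>\<close>.\<close>
    obtain \<alpha> d where gen: "(\<alpha>, d) \<in> gens \<Gamma>" and "pair \<eta> d \<noteq> 0"
      using gens_detect_nonzero[OF assms(2)] by blast
    have "\<alpha> \<in> \<Gamma>" "\<alpha> \<noteq> 0" using gen by (simp_all add: gens_iff)
    hence "- \<alpha> - \<zeta> \<in> \<Gamma>" "- \<alpha> - \<zeta> \<noteq> - \<zeta>"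
      using add_subgroup_diff[OF subgroup _ assms(1)] add_subgroup_neg[OF subgroup] by auto
    then obtain h where h: "h \<in> U" "h(- \<zeta> := 0) = basis_vec (- \<alpha> - \<zeta>)"
      using B_submodule_reaches_basis_vec[OF U(1) u(1) \<beta>(2,1)] by blast
    have "act (cB \<zeta> \<eta>) \<alpha> d h = act (cB \<zeta> \<eta>) \<alpha> d (basis_vec (- \<alpha> - \<zeta>))"
      using act_fun_upd_zero[of "cB \<zeta> \<eta>", OF cB_at_minus_zeta[OF \<open>\<alpha> \<noteq> 0\<close>], where f = h] h(2) by simp
    also have "\<dots> = (\<lambda>\<gamma>. pair \<eta> d * basis_vec (- \<zeta>) \<gamma>)"
      by (simp add: act_basis_vec cB_def)
    finally have "(\<lambda>\<gamma>. pair \<eta> d * basis_vec (- \<zeta>) \<gamma>) \<in> U"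
      using submodule_act[OF U(1) gen h(1)] by simp
    from submodule_scale[OF U(1) this, of "1 / pair \<eta> d"] show ?thesis
      using \<open>pair \<eta> d \<noteq> 0\<close> by simp
  next
    case False
    hence "u \<in> span_of \<Gamma> {- \<zeta>}"
      using u(1) submodule_subset[OF U(1)] by (auto simp: span_of_iff)
    hence u_eq: "u = (\<lambda>\<gamma>. u (- \<zeta>) * basis_vec (- \<zeta>) \<gamma>)" by (rule span_of_singleton_eq)
    hence "u (- \<zeta>) \<noteq> 0" using u(2) by auto
    hence "basis_vec (- \<zeta>) = (\<lambda>\<gamma>. (1 / u (- \<zeta>)) * u \<gamma>)" by (subst u_eq) (simp add: ext)
    thus ?thesis using submodule_scale[OF U(1) u(1)] by metis
  qed
qed

lemma B_quotient_irreducible: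
  assumes "\<zeta> \<in> \<Gamma>"
  shows "irreducible_quot \<Gamma> (cB \<zeta> \<eta>) (span_of \<Gamma> {- \<zeta>})"
  unfolding irreducible_quot_def
proof (intro conjI allI impI)
  let ?T = "span_of \<Gamma> {- \<zeta>}"
  show T: "submodule \<Gamma> (cB \<zeta> \<eta>) ?T"
    by (rule submodule_span_of_singleton) (simp add: gens_iff cB_at_minus_zeta)
  obtain \<epsilon> where "\<epsilon> \<in> \<Gamma>" "\<epsilon> \<noteq> - \<zeta>" by (rule exists_other_element)
  hence "basis_vec \<epsilon> \<in> modspace \<Gamma> - ?T"
    using basis_vec_in_modspace by (auto simp: span_of_iff basis_vec_def)
  thus "?T \<noteq> modspace \<Gamma>" by blast
  have "- \<zeta> \<in> \<Gamma>" using add_subgroup_neg[OF subgroup assms] .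
  fix W assume W: "submodule \<Gamma> (cB \<zeta> \<eta>) W \<and> ?T \<subseteq> W"
  show "W = ?T \<or> W = modspace \<Gamma>"
  proof (cases "W \<subseteq> ?T")
    case False
    then obtain f where f: "f \<in> W" "f \<notin> ?T" by blast
    moreover have "f \<in> modspace \<Gamma>" using f(1) W submodule_subset by blast
    ultimately obtain \<beta> where \<beta>: "\<beta> \<noteq> - \<zeta>" "f \<beta> \<noteq> 0" unfolding span_of_iff by blast
    have trivial_in: "basis_vec (- \<zeta>) \<in> W"
      using W basis_vec_in_span_of[OF \<open>- \<zeta> \<in> \<Gamma>\<close>] by blast
    have "basis_vec \<gamma> \<in> W" if \<gamma>: "\<gamma> \<in> \<Gamma>" for \<gamma>
    proof (cases "\<gamma> = - \<zeta>")
      case False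
      obtain h where h: "h \<in> W" "h(- \<zeta> := 0) = basis_vec \<gamma>"
        using W B_submodule_reaches_basis_vec[OF _ f(1) \<beta>(2,1) \<gamma> False] by blast
      have "h(- \<zeta> := 0) \<in> W" using W submodule_fun_upd_zero[OF _ h(1) trivial_in] by blast
      thus ?thesis using h(2) by simp
    qed (use trivial_in in simp)
    hence "modspace \<Gamma> \<subseteq> W"
      using span_of_subset_submodule[of \<Gamma> _ W \<Gamma>] span_of_superset[of \<Gamma> \<Gamma>] W by blast
    thus ?thesis using W submodule_subset by blast
  qed (use W in blast)
qed

lemma B_structure:
  assumes "\<zeta> \<in> \<Gamma>" "\<eta> \<noteq> 0"
  shows "indecomposable_mod \<Gamma> (cB \<zeta> \<eta>)" "reducible_mod \<Gamma> (cB \<zeta> \<eta>)"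
    and "submodule \<Gamma> (cB \<zeta> \<eta>) (span_of \<Gamma> {- \<zeta>})"
    and "\<forall>(\<alpha>, d)\<in>gens \<Gamma>. \<forall>f\<in>span_of \<Gamma> {- \<zeta>}. act (cB \<zeta> \<eta>) \<alpha> d f = (\<lambda>_. 0)"
    and "irreducible_quot \<Gamma> (cB \<zeta> \<eta>) (span_of \<Gamma> {- \<zeta>})"
proof -
  let ?T = "span_of \<Gamma> {- \<zeta>}"
  have "- \<zeta> \<in> \<Gamma>" using add_subgroup_neg[OF subgroup assms(1)] .
  show quot: "irreducible_quot \<Gamma> (cB \<zeta> \<eta>) ?T" using B_quotient_irreducible[OF assms(1)] .
  hence T: "submodule \<Gamma> (cB \<zeta> \<eta>) ?T" "?T \<noteq> modspace \<Gamma>"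
    unfolding irreducible_quot_def by blast+
  thus "submodule \<Gamma> (cB \<zeta> \<eta>) ?T" by blast
  show "\<forall>(\<alpha>, d)\<in>gens \<Gamma>. \<forall>f\<in>?T. act (cB \<zeta> \<eta>) \<alpha> d f = (\<lambda>_. 0)"
  proof (intro ballI, clarify)
    fix \<alpha> d f assume "(\<alpha>, d) \<in> gens \<Gamma>" "f \<in> ?T"
    thus "act (cB \<zeta> \<eta>) \<alpha> d f = (\<lambda>_. 0)"
      by (intro act_span_of_singleton) (simp_all add: gens_iff cB_at_minus_zeta)
  qed
  have "basis_vec (- \<zeta>) \<in> ?T" using basis_vec_in_span_of[OF \<open>- \<zeta> \<in> \<Gamma>\<close>] by blast
  hence "?T \<noteq> {\<lambda>_. 0}" using basis_vec_nonzero by force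
  thus "reducible_mod \<Gamma> (cB \<zeta> \<eta>)" using T unfolding reducible_mod_def by blast
  show "indecomposable_mod \<Gamma> (cB \<zeta> \<eta>)"
  proof (rule indecomposable_modI)
    show "basis_vec (- \<zeta>) \<in> modspace \<Gamma>" using basis_vec_in_modspace[OF \<open>- \<zeta> \<in> \<Gamma>\<close>] .
    show "basis_vec (- \<zeta>) \<in> U" if "submodule \<Gamma> (cB \<zeta> \<eta>) U" "U \<noteq> {\<lambda>_. 0}" for U
      using B_submodule_contains_trivial[OF assms that] .
  qed (rule basis_vec_nonzero)
qed

end

theorem lemma2p1:
  fixes \<Gamma> :: "('n::finite \<Rightarrow> 'a::field_char_0) set"
    and \<mu> \<eta> \<zeta> :: "'n \<Rightarrow> 'a"
  assumes "alg_closed TYPE('a)"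
    and "card (UNIV :: 'n set) \<ge> 2"
    and "add_subgroup \<Gamma>"
    and "nondeg \<Gamma>"
    and "\<zeta> \<in> \<Gamma>"
  shows
    "(\<mu> \<notin> \<Gamma> \<longrightarrow> irreducible_mod \<Gamma> (cM \<mu>))
   \<and> (\<mu> \<in> \<Gamma> \<longrightarrow>
        irreducible_sub \<Gamma> (cM \<mu>) (span_of \<Gamma> (\<Gamma> - {- \<mu>}))
      \<and> irreducible_sub \<Gamma> (cM \<mu>) (span_of \<Gamma> {- \<mu>})
      \<and> span_of \<Gamma> (\<Gamma> - {- \<mu>}) \<inter> span_of \<Gamma> {- \<mu>} = {\<lambda>_. 0}
      \<and> modspace \<Gamma> = {h. \<exists>f\<in>span_of \<Gamma> (\<Gamma> - {- \<mu>}). \<exists>g\<in>span_of \<Gamma> {- \<mu>}.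
                          h = (\<lambda>b. f b + g b)})
   \<and> (\<eta> \<noteq> 0 \<longrightarrow>
        indecomposable_mod \<Gamma> (cA \<zeta> \<eta>) \<and> reducible_mod \<Gamma> (cA \<zeta> \<eta>)
      \<and> indecomposable_mod \<Gamma> (cB \<zeta> \<eta>) \<and> reducible_mod \<Gamma> (cB \<zeta> \<eta>)
      \<and> irreducible_sub \<Gamma> (cA \<zeta> \<eta>) (span_of \<Gamma> (\<Gamma> - {- \<zeta>}))
      \<and> submodule \<Gamma> (cB \<zeta> \<eta>) (span_of \<Gamma> {- \<zeta>})
      \<and> (\<forall>(\<alpha>, d)\<in>gens \<Gamma>. \<forall>f\<in>span_of \<Gamma> {- \<zeta>}. act (cB \<zeta> \<eta>) \<alpha> d f = (\<lambda>_. 0))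
      \<and> irreducible_quot \<Gamma> (cB \<zeta> \<eta>) (span_of \<Gamma> {- \<zeta>}))
   \<and> (\<eta> = 0 \<longrightarrow> mod_iso \<Gamma> (cA \<zeta> 0) (cB \<zeta> 0) \<and> mod_iso \<Gamma> (cB \<zeta> 0) (cM 0))"
proof -
  interpret nondeg_subgroup \<Gamma> using assms(2-4) by unfold_locales
  show ?thesis
    using M_irreducible[of \<mu>] M_decomposes[of \<mu>] A_structure[OF assms(5), of \<eta>]
      B_structure[OF assms(5), of \<eta>] A_zero_iso_B_zero[of \<Gamma> \<zeta>] B_zero_iso_M_zero[OF assms(3,5)]
    by (intro conjI impI) simp_all
qed

end
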